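(* Let $\mathcal{I}$ be a finite set of items and $\mathcal{D}$ a transaction database over $\mathcal{I}$. Let $t_o \in \mathcal{D}$ be a transaction with itemset $T_o \subseteq \mathcal{I}$, and let $\mathcal{D}^- = \mathcal{D} \setminus \{t_o\}$. Then a closed itemset $c \in \mathcal{C}(\mathcal{D})$ fails to be closed in $\mathcal{D}^-$ (i.e. $c \in \mathcal{C}(\mathcal{D}) \setminus \mathcal{C}(\mathcal{D}^-)$) if and only if there exists $c_g \in \mathcal{C}(\mathcal{D})$ with $c = c_g \cap T_o$ and $\sigma_{\mathcal{D}}(c_g) = \sigma_{\mathcal{D}}(c) - 1$. In other words, $$\mathcal{C}(\mathcal{D}) \setminus \mathcal{C}(\mathcal{D}^-) = \{c \in \mathcal{C}(\mathcal{D}) \mid \exists c_g \in \mathcal{C}(\mathcal{D}) : c = c_g \cap T_o,\ \sigma_{\mathcal{D}}(c_g) = \sigma_{\mathcal{D}}(c) - 1\}.$$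
   Context: A transaction database $\mathcal{D}$ over a finite item set $\mathcal{I}$ is a finite set of transactions, each a pair $(j, Z)$ with $j$ a transaction identifier (tid, all tids distinct) and $Z \subseteq \mathcal{I}$ an itemset. For $X \subseteq \mathcal{I}$, its support set is $\tau_{\mathcal{D}}(X) = \{ j \mid (j,Z) \in \mathcal{D},\ X \subseteq Z\}$ and its support is $\sigma_{\mathcal{D}}(X) = |\tau_{\mathcal{D}}(X)|$. An itemset $X \subseteq \mathcal{I}$ is closed in $\mathcal{D}$ if no proper superset $Y \supsetneq X$ (with $Y \subseteq \mathcal{I}$) has $\sigma_{\mathcal{D}}(Y) = \sigma_{\mathcal{D}}(X)$; $\mathcal{C}(\mathcal{D})$ denotes the family of all closed itemsets of $\mathcal{D}$ (in particular $\mathcal{I}$ itself is always closed). A closed itemset of $\mathcal{D}$ that is not closed in $\mathcal{D}^-$ is called obsolete; a $c_g$ as in the claim is called a genitor of $c$. *)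

theory Defs
  imports Main
begin

definition tids_distinct :: "('t \<times> 'i set) set \<Rightarrow> bool" where
  "tids_distinct D \<longleftrightarrow> (\<forall>j Z Z'. (j, Z) \<in> D \<longrightarrow> (j, Z') \<in> D \<longrightarrow> Z = Z')"

definition transaction_db :: "'i set \<Rightarrow> ('t \<times> 'i set) set \<Rightarrow> bool" where
  "transaction_db I D \<longleftrightarrow> finite D \<and> tids_distinct D \<and> (\<forall>(j, Z) \<in> D. Z \<subseteq> I)"

definition supp_set :: "('t \<times> 'i set) set \<Rightarrow> 'i set \<Rightarrow> 't set" where
  "supp_set D X = {j. \<exists>Z. (j, Z) \<in> D \<and> X \<subseteq> Z}"

definition supp :: "('t \<times> 'i set) set \<Rightarrow> 'i set \<Rightarrow> nat" where
  "supp D X = card (supp_set D X)"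

definition closed_in :: "'i set \<Rightarrow> ('t \<times> 'i set) set \<Rightarrow> 'i set \<Rightarrow> bool" where
  "closed_in I D X \<longleftrightarrow> X \<subseteq> I \<and> \<not> (\<exists>Y. X \<subset> Y \<and> Y \<subseteq> I \<and> supp D Y = supp D X)"

definition closed_sets :: "'i set \<Rightarrow> ('t \<times> 'i set) set \<Rightarrow> 'i set set" where
  "closed_sets I D = {X. closed_in I D X}"

end

theory Submission
  imports Defs
begin

text \<open>Deleting the transaction \<open>(j, T\<^sub>o)\<close> only removes \<open>j\<close> from support sets. Hence a closed
  itemset \<open>c\<close> stops being closed exactly when some proper superset \<open>Y\<close> is supported by all
  transactions of \<open>c\<close> except \<open>j\<close>. The closure \<open>c\<^sub>g\<close> of \<open>Y\<close> is then closed with support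
  \<open>\<sigma>(c) - 1\<close>, and since the closure of an itemset is the intersection of its supporting
  transactions, \<open>c = c\<^sub>g \<inter> T\<^sub>o\<close>. Conversely, such a \<open>c\<^sub>g\<close> is a proper superset of \<open>c\<close> not
  contained in \<open>T\<^sub>o\<close>, so it loses no support when \<open>(j, T\<^sub>o)\<close> is deleted, while \<open>c\<close> loses
  exactly one.\<close>

definition common_items :: "'i set \<Rightarrow> ('t \<times> 'i set) set \<Rightarrow> 't set \<Rightarrow> 'i set" where
  "common_items I D T = {i \<in> I. \<forall>(j, Z) \<in> D. j \<in> T \<longrightarrow> i \<in> Z}"

definition db_closure :: "'i set \<Rightarrow> ('t \<times> 'i set) set \<Rightarrow> 'i set \<Rightarrow> 'i set" where
  "db_closure I D X = common_items I D (supp_set D X)"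

lemma finite_supp_set: "finite D \<Longrightarrow> finite (supp_set D X)"
  by (rule finite_subset[of _ "fst ` D"]) (force simp: supp_set_def)+

lemma supp_set_antimono: "X \<subseteq> Y \<Longrightarrow> supp_set D Y \<subseteq> supp_set D X"
  unfolding supp_set_def by blast

lemma supp_set_Diff_transaction:
  assumes "tids_distinct D" "(j, To) \<in> D"
  shows "supp_set (D - {(j, To)}) X = supp_set D X - {j}"
  using assms unfolding supp_set_def tids_distinct_def by auto

lemma subset_in_supp_set:
  "tids_distinct D \<Longrightarrow> (j, Z) \<in> D \<Longrightarrow> j \<in> supp_set D X \<Longrightarrow> X \<subseteq> Z"
  unfolding supp_set_def tids_distinct_def by blast

lemma supp_set_eq_if_supp_eq:
  assumes "finite D" "X \<subseteq> Y" "supp D Y = supp D X"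
  shows "supp_set D Y = supp_set D X"
  using card_subset_eq[OF finite_supp_set[OF assms(1)] supp_set_antimono[OF assms(2)]] assms(3)
  unfolding supp_def by blast

lemma closed_in_iff_supp_set:
  assumes "finite D"
  shows "closed_in I D X \<longleftrightarrow>
    X \<subseteq> I \<and> (\<forall>Y. X \<subset> Y \<longrightarrow> Y \<subseteq> I \<longrightarrow> supp_set D Y \<noteq> supp_set D X)"
proof -
  have "supp D Y = supp D X \<longleftrightarrow> supp_set D Y = supp_set D X" if "X \<subset> Y" for Y
    using supp_set_eq_if_supp_eq[OF assms psubset_imp_subset[OF that]] by (auto simp: supp_def)
  then show ?thesis unfolding closed_in_def by blast
qed

lemma common_items_insert:
  assumes "tids_distinct D" "(j, To) \<in> D"
  shows "common_items I D (insert j T) = common_items I D T \<inter> To"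
  using assms unfolding common_items_def tids_distinct_def by blast

lemma db_closure_subset: "db_closure I D X \<subseteq> I"
  unfolding db_closure_def common_items_def by blast

lemma db_closure_maximal:
  assumes "tids_distinct D" "Y \<subseteq> I" "supp_set D Y = supp_set D X"
  shows "Y \<subseteq> db_closure I D X"
proof
  fix i assume "i \<in> Y"
  have "i \<in> Z" if "(j, Z) \<in> D" "j \<in> supp_set D X" for j Z
    using subset_in_supp_set[OF assms(1) that(1)] that(2) assms(3) \<open>i \<in> Y\<close> by blast
  then show "i \<in> db_closure I D X"
    unfolding db_closure_def common_items_def using \<open>i \<in> Y\<close> assms(2) by blast
qed

lemma subset_db_closure: "tids_distinct D \<Longrightarrow> X \<subseteq> I \<Longrightarrow> X \<subseteq> db_closure I D X"
  using db_closure_maximal by blast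

lemma supp_set_db_closure:
  assumes "tids_distinct D" "X \<subseteq> I"
  shows "supp_set D (db_closure I D X) = supp_set D X"
proof
  show "supp_set D (db_closure I D X) \<subseteq> supp_set D X"
    using supp_set_antimono[OF subset_db_closure[OF assms]] .
  show "supp_set D X \<subseteq> supp_set D (db_closure I D X)"
  proof
    fix j assume j: "j \<in> supp_set D X"
    then obtain Z where Z: "(j, Z) \<in> D" "X \<subseteq> Z" unfolding supp_set_def by blast
    have "db_closure I D X \<subseteq> Z" unfolding db_closure_def common_items_def using Z j by blast
    then show "j \<in> supp_set D (db_closure I D X)" using Z unfolding supp_set_def by blast
  qed
qed

lemma closed_in_db_closure:
  assumes "finite D" "tids_distinct D" "X \<subseteq> I"
  shows "closed_in I D (db_closure I D X)"
proof -
  have no_larger: "\<not> db_closure I D X \<subset> Y"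
    if "Y \<subseteq> I" "supp_set D Y = supp_set D (db_closure I D X)" for Y
  proof -
    have "supp_set D Y = supp_set D X"
      using that(2) supp_set_db_closure[OF assms(2,3)] by (rule trans)
    then show ?thesis using db_closure_maximal[OF assms(2) that(1)] by blast
  qed
  show ?thesis
    unfolding closed_in_iff_supp_set[OF assms(1)] using db_closure_subset no_larger by metis
qed

lemma db_closure_closed:
  assumes "finite D" "tids_distinct D" "closed_in I D X"
  shows "db_closure I D X = X"
proof -
  have X_sub: "X \<subseteq> I" using assms(3) unfolding closed_in_def by blast
  have "\<not> X \<subset> db_closure I D X"
    using assms(3) db_closure_subset supp_set_db_closure[OF assms(2) X_sub]
    unfolding closed_in_iff_supp_set[OF assms(1)] by metis
  then show ?thesis using subset_db_closure[OF assms(2) X_sub] by blast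
qed

lemma int_supp_Diff_tid:
  assumes "finite D" "j \<in> supp_set D X" "supp_set D Y = supp_set D X - {j}"
  shows "int (supp D Y) = int (supp D X) - 1"
proof -
  have "card (supp_set D X) > 0"
    using assms(2) finite_supp_set[OF assms(1)] card_gt_0_iff by blast
  then show ?thesis
    using assms(2,3) unfolding supp_def by simp
qed

lemma obsolete_has_genitor:
  assumes "finite D" "tids_distinct D" "(j, To) \<in> D"
    and "closed_in I D c" "\<not> closed_in I (D - {(j, To)}) c"
  obtains cg where "closed_in I D cg" "c = cg \<inter> To"
    "j \<in> supp_set D c" "supp_set D cg = supp_set D c - {j}"
proof -
  have c_sub: "c \<subseteq> I" using assms(4) unfolding closed_in_def by blast
  obtain Y where Y: "c \<subset> Y" "Y \<subseteq> I" "supp_set D Y - {j} = supp_set D c - {j}"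
    using assms(5) c_sub
    unfolding closed_in_iff_supp_set[OF finite_Diff[OF assms(1)]]
      supp_set_Diff_transaction[OF assms(2,3)] by blast
  moreover have "supp_set D Y \<noteq> supp_set D c"
    using assms(4) Y(1,2) by (simp add: closed_in_iff_supp_set[OF assms(1)])
  moreover have "supp_set D Y \<subseteq> supp_set D c"
    using Y(1) by (simp add: supp_set_antimono)
  ultimately have j_c: "j \<in> supp_set D c" and Y_supp: "supp_set D Y = supp_set D c - {j}"
    by blast+
  define cg where "cg = db_closure I D Y"
  have cg_supp: "supp_set D cg = supp_set D c - {j}"
    unfolding cg_def using supp_set_db_closure[OF assms(2) Y(2)] Y_supp by simp
  have cg_closed: "closed_in I D cg"
    unfolding cg_def using closed_in_db_closure[OF assms(1,2) Y(2)] .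
  have "c = common_items I D (supp_set D c)"
    using db_closure_closed[OF assms(1,2,4)] unfolding db_closure_def by simp
  also have "supp_set D c = insert j (supp_set D cg)"
    using j_c cg_supp by blast
  also have "common_items I D (insert j (supp_set D cg)) = db_closure I D cg \<inter> To"
    unfolding db_closure_def using common_items_insert[OF assms(2,3)] .
  also have "db_closure I D cg = cg"
    using db_closure_closed[OF assms(1,2) cg_closed] .
  finally show thesis
    using that cg_closed j_c cg_supp by blast
qed

lemma genitor_makes_obsolete:
  assumes "finite D" "tids_distinct D" "(j, To) \<in> D"
    and "cg \<subseteq> I" "c = cg \<inter> To" "int (supp D cg) = int (supp D c) - 1"
  shows "\<not> closed_in I (D - {(j, To)}) c"
proof -
  have "cg \<noteq> c" using assms(6) by auto
  then have c_psub: "c \<subset> cg" and "\<not> cg \<subseteq> To" using assms(5) by blast+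
  then have "j \<notin> supp_set D cg" using subset_in_supp_set[OF assms(2,3)] by blast
  moreover have j_c: "j \<in> supp_set D c" using assms(3,5) unfolding supp_set_def by blast
  moreover have "supp_set D cg \<subseteq> supp_set D c"
    using supp_set_antimono[OF psubset_imp_subset[OF c_psub]] .
  ultimately have "supp_set D cg \<subseteq> supp_set D c - {j}" by blast
  moreover have "card (supp_set D cg) = card (supp_set D c - {j})"
    using j_c assms(6) finite_supp_set[OF assms(1)]
    unfolding supp_def by (simp add: card_Diff_singleton)
  ultimately have "supp_set D cg = supp_set D c - {j}"
    using card_subset_eq[OF finite_Diff[OF finite_supp_set[OF assms(1)]]] by blast
  then have "supp_set (D - {(j, To)}) cg = supp_set (D - {(j, To)}) c"
    unfolding supp_set_Diff_transaction[OF assms(2,3)] by blast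
  then show ?thesis
    using c_psub assms(4) unfolding closed_in_iff_supp_set[OF finite_Diff[OF assms(1)]] by metis
qed

theorem mainTheorem2:
  fixes I :: "'i set" and D :: "('t \<times> 'i set) set" and j :: 't and To :: "'i set"
  assumes "finite I"
    and "transaction_db I D"
    and "(j, To) \<in> D"
  shows "closed_sets I D - closed_sets I (D - {(j, To)}) =
    {c \<in> closed_sets I D. \<exists>cg \<in> closed_sets I D. c = cg \<inter> To \<and>
        int (supp D cg) = int (supp D c) - 1}"
proof -
  have D: "finite D" "tids_distinct D" using assms(2) unfolding transaction_db_def by auto
  have "\<exists>cg. closed_in I D cg \<and> c = cg \<inter> To \<and> int (supp D cg) = int (supp D c) - 1"
    if "closed_in I D c" "\<not> closed_in I (D - {(j, To)}) c" for c
    using obsolete_has_genitor[OF D assms(3) that] int_supp_Diff_tid[OF D(1)] by metis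
  moreover have "\<not> closed_in I (D - {(j, To)}) c"
    if "closed_in I D cg" "c = cg \<inter> To" "int (supp D cg) = int (supp D c) - 1" for c cg
    using genitor_makes_obsolete[OF D assms(3) _ that(2,3)] that(1)
    unfolding closed_in_def by blast
  ultimately show ?thesis unfolding closed_sets_def by blast
qed

end
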